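(* For $\nu>0$ let $Q_\nu(x)=\frac1x+\frac{I_{\nu+1}(x)}{I_\nu(x)}$ for $x>0$. Then $Q_\nu$ is strictly decreasing on $\left(0,\sqrt{2\nu+4}\right)$ for every $\nu>0$, and $Q_\nu$ is strictly decreasing on $(0,\infty)$ for every $\nu\in\left(0,\tfrac12\right]$.
   Context: $I_\nu$ denotes the modified Bessel function of the first kind of order $\nu$. *)

theory Defs
  imports "HOL-Analysis.Analysis"
begin

definition besselI :: "real \<Rightarrow> real \<Rightarrow> real" where
  "besselI nu x = (\<Sum>k. (x / 2) powr (2 * real k + nu) / (fact k * Gamma (real k + nu + 1)))"

definition Qnu :: "real \<Rightarrow> real \<Rightarrow> real" where
  "Qnu nu x = 1 / x + besselI (nu + 1) x / besselI nu x"

end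

theory Submission
  imports Defs
begin

text \<open>
  Write \<open>I_nu(x) = (x/2)^nu F_nu(x^2/4)\<close> with the entire, positive series
  \<open>F_mu(t) = sum_k t^k / (k! Gamma(k + mu + 1))\<close>.  Then \<open>F_mu' = F_(mu+1)\<close> and
  \<open>t F_(mu+2) = F_mu - (mu + 1) F_(mu+1)\<close>, and a direct computation gives
  \<open>Q_nu'(x) = - Pnu nu t / (x^2 F_nu(t)^2)\<close> with \<open>t = x^2/4\<close> and an explicit quadratic
  form \<open>Pnu\<close> in \<open>F_nu(t), F_(nu+1)(t)\<close>.  So \<open>Q_nu\<close> is strictly decreasing wherever
  \<open>Pnu nu (x^2/4) > 0\<close>, and the theorem reduces to two positivity statements:
  - for \<open>nu \<le> 1/2\<close>, \<open>Pnu\<close> is nondecreasing in \<open>t\<close> because its derivative is a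
    nonnegative multiple of a quantity \<open>-D\<close> shown positive by a weighted monotonicity argument;
  - for \<open>2 t < nu + 2\<close>, positivity of \<open>Pnu\<close> follows by an elementary inequality from
    positivity of another quadratic form \<open>H\<close>, again established by weighted monotonicity
    (\<open>s powr a * phi s\<close> is increasing and vanishes at \<open>0\<close>).
\<close>

text \<open>If \<open>a * phi s + s * phi' s > 0\<close> on \<open>(0, t)\<close> with \<open>a > 0\<close>, then \<open>s powr a * phi s\<close> increases
  from its value \<open>0\<close> at \<open>s = 0\<close>, hence \<open>phi t > 0\<close>.\<close>

lemma pos_by_weighted_derivative:
  fixes phi phi' :: "real \<Rightarrow> real" and a t :: real
  assumes a: "a > 0" and t: "t > 0"
    and deriv: "\<And>s. 0 \<le> s \<Longrightarrow> s \<le> t \<Longrightarrow> (phi has_real_derivative phi' s) (at s)"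
    and weighted: "\<And>s. 0 < s \<Longrightarrow> s < t \<Longrightarrow> a * phi s + s * phi' s > 0"
  shows "phi t > 0"
proof -
  define W where "W s = s powr a * phi s" for s
  have "W 0 < W t"
  proof (rule DERIV_pos_imp_increasing_open[OF t])
    fix s :: real assume s: "0 < s" "s < t"
    have "(W has_real_derivative a * s powr (a - 1) * phi s + phi' s * s powr a) (at s)"
      unfolding W_def[abs_def] using s by (intro DERIV_mult has_real_derivative_powr deriv) auto
    moreover have "a * s powr (a - 1) * phi s + phi' s * s powr a = s powr (a - 1) * (a * phi s + s * phi' s)"
      using s powr_add[of s "a - 1" 1] by (simp add: algebra_simps)
    moreover have "s powr (a - 1) * (a * phi s + s * phi' s) > 0"
      using s weighted[OF s] by simp
    ultimately show "\<exists>y. (W has_real_derivative y) (at s) \<and> y > 0" by auto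
  next
    have "continuous_on {0..t} phi"
      using deriv by (meson DERIV_isCont atLeastAtMost_iff continuous_at_imp_continuous_on)
    moreover have "continuous_on {0..t} (\<lambda>s. s powr a)"
      using a by (intro continuous_on_powr') (auto intro: continuous_intros)
    ultimately show "continuous_on {0..t} W"
      unfolding W_def[abs_def] by (intro continuous_on_mult)
  qed
  then show ?thesis using t by (simp add: W_def zero_less_mult_iff)
qed

lemma strict_antimono_on_if_deriv_neg:
  fixes f f' :: "real \<Rightarrow> real" and S :: "real set"
  assumes S: "is_interval S"
    and deriv: "\<And>x. x \<in> S \<Longrightarrow> (f has_real_derivative f' x) (at x) \<and> f' x < 0"
  shows "strict_antimono_on S f"
  unfolding monotone_on_def
proof (intro ballI impI)
  fix x y assume "x \<in> S" "y \<in> S" "x < y"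
  then have "z \<in> S" if "x \<le> z" "z \<le> y" for z
    using S that unfolding is_interval_1 by blast
  then show "f y < f x"
    using DERIV_neg_imp_decreasing[OF \<open>x < y\<close>] deriv by blast
qed

definition bessel_coeff :: "real \<Rightarrow> nat \<Rightarrow> real" where
  "bessel_coeff mu k = 1 / (fact k * Gamma (real k + mu + 1))"

definition besselF :: "real \<Rightarrow> real \<Rightarrow> real" where
  "besselF mu t = (\<Sum>k. bessel_coeff mu k * t ^ k)"

text \<open>\<open>Gamma\<close> is bounded below by \<open>Gamma (mu + 1)\<close> along the shifts \<open>mu + 1 + k\<close>;
  this gives domination by the exponential series.\<close>

lemma Gamma_shift_ge:
  assumes "mu \<ge> 0"
  shows "Gamma (mu + 1) \<le> Gamma (real k + mu + 1)"
proof -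
  have nonpole: "mu + 1 \<notin> \<int>\<^sub>\<le>\<^sub>0" using assms by (auto elim!: nonpos_Ints_cases)
  have "1 \<le> pochhammer (mu + 1) k"
    unfolding pochhammer_prod using assms by (intro prod_ge_1) auto
  then have "Gamma (mu + 1) \<le> Gamma (mu + 1 + of_nat k)"
    using pochhammer_Gamma[OF nonpole, of k] assms by (simp add: le_divide_eq)
  then show ?thesis by (simp add: add_ac)
qed

lemma bessel_coeff_pos: "mu \<ge> 0 \<Longrightarrow> bessel_coeff mu k > 0"
  unfolding bessel_coeff_def by (simp add: add_pos_nonneg)

lemma summable_bessel_coeff:
  assumes "mu \<ge> 0"
  shows "summable (\<lambda>k. bessel_coeff mu k * t ^ k)"
proof (rule summable_comparison_test)
  show "summable (\<lambda>k. inverse (fact k) * \<bar>t\<bar> ^ k / Gamma (mu + 1))"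
    by (intro summable_divide summable_exp)
  have "norm (bessel_coeff mu k * t ^ k) \<le> inverse (fact k) * \<bar>t\<bar> ^ k / Gamma (mu + 1)" for k
    using Gamma_shift_ge[OF assms, of k] assms
    by (simp add: bessel_coeff_def abs_mult power_abs divide_simps mult_left_mono)
  then show "\<exists>N. \<forall>k\<ge>N. norm (bessel_coeff mu k * t ^ k) \<le> inverse (fact k) * \<bar>t\<bar> ^ k / Gamma (mu + 1)"
    by blast
qed

lemma diffs_bessel_coeff:
  assumes "mu \<ge> 0"
  shows "diffs (bessel_coeff mu) = bessel_coeff (mu + 1)"
proof
  fix k
  have "Gamma (real (Suc k) + mu + 1) = Gamma (real k + (mu + 1) + 1)"
    by (simp add: algebra_simps)
  then show "diffs (bessel_coeff mu) k = bessel_coeff (mu + 1) k"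
    by (simp add: diffs_def bessel_coeff_def fact_Suc del: of_nat_Suc)
qed

lemma besselF_deriv:
  assumes "mu \<ge> 0"
  shows "(besselF mu has_real_derivative besselF (mu + 1) t) (at t)"
  unfolding besselF_def[abs_def] diffs_bessel_coeff[OF assms, symmetric]
  by (rule termdiffs_strong_converges_everywhere[OF summable_bessel_coeff[OF assms]])

lemma besselF_deriv_succ:
  assumes "mu \<ge> 0"
  shows "(besselF (mu + 1) has_real_derivative besselF (mu + 2) t) (at t)"
  using besselF_deriv[of "mu + 1" t] assms by (simp add: add.assoc)

text \<open>Coefficient form of the recurrence \<open>t F_(mu+2) = F_mu - (mu + 1) F_(mu+1)\<close>,
  which follows from \<open>Gamma (z + 1) = z Gamma z\<close>.\<close>

lemma bessel_coeff_recurrence: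
  assumes "mu \<ge> 0"
  shows "bessel_coeff mu (Suc k) - (mu + 1) * bessel_coeff (mu + 1) (Suc k) = bessel_coeff (mu + 2) k"
proof -
  define z where "z = real k + mu + 2"
  have z: "z > 0" using assms by (simp add: z_def)
  have G: "Gamma (z + 1) = z * Gamma z"
    using z by (intro Gamma_plus1) (auto elim!: nonpos_Ints_cases)
  have arg: "real (Suc k) + mu + 1 = z" "real (Suc k) + (mu + 1) + 1 = z + 1"
    "real k + (mu + 2) + 1 = z + 1" by (simp_all add: z_def)
  define D where "D = (real k + 1) * fact k * Gamma z"
  have D: "D > 0" using z unfolding D_def by simp
  have c1: "bessel_coeff mu (Suc k) = 1 / D"
    unfolding bessel_coeff_def arg D_def by (simp add: fact_Suc)
  have c2: "bessel_coeff (mu + 1) (Suc k) = 1 / (D * z)"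
    unfolding bessel_coeff_def arg G D_def by (simp add: fact_Suc algebra_simps)
  have "(real k + 1) / (D * z) = (real k + 1) / ((real k + 1) * (fact k * (z * Gamma z)))"
    by (simp add: D_def ac_simps)
  then have c3: "bessel_coeff (mu + 2) k = (real k + 1) / (D * z)"
    unfolding bessel_coeff_def arg G by simp
  have "1 / D - (mu + 1) * (1 / (D * z)) = (z - (mu + 1)) / (D * z)"
    using z D by (simp add: field_simps)
  also have "z - (mu + 1) = real k + 1" by (simp add: z_def)
  finally show ?thesis unfolding c1 c2 c3 .
qed

lemma besselF_recurrence:
  assumes "mu \<ge> 0"
  shows "t * besselF (mu + 2) t = besselF mu t - (mu + 1) * besselF (mu + 1) t"
proof -
  define d where "d k = (bessel_coeff mu k - (mu + 1) * bessel_coeff (mu + 1) k) * t ^ k" for k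
  have sums: "(\<lambda>k. bessel_coeff m k * t ^ k) sums besselF m t" if "m \<ge> 0" for m
    unfolding besselF_def using summable_bessel_coeff[OF that] by (rule summable_sums)
  have "d sums (besselF mu t - (mu + 1) * besselF (mu + 1) t)"
    unfolding d_def using sums_diff[OF sums[of mu] sums_mult[OF sums[of "mu + 1"], of "mu + 1"]] assms
    by (simp add: algebra_simps)
  moreover have "(\<lambda>k. d (Suc k)) sums (t * besselF (mu + 2) t)"
    unfolding d_def bessel_coeff_recurrence[OF assms]
    using sums_mult[OF sums, of "mu + 2" t] assms by (simp add: algebra_simps)
  moreover have "d 0 = 0"
  proof -
    have "Gamma (mu + 1 + 1) = (mu + 1) * Gamma (mu + 1)"
      using assms by (intro Gamma_plus1) (auto elim!: nonpos_Ints_cases)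
    moreover have "Gamma (mu + 1) > 0" using assms by simp
    ultimately show ?thesis by (simp add: d_def bessel_coeff_def add.assoc)
  qed
  ultimately show ?thesis
    using sums_Suc_iff[of d] sums_unique2 by (metis add.right_neutral)
qed

text \<open>All coefficients are positive, so \<open>F_mu\<close> is positive on \<open>[0, \<infinity>)\<close>.\<close>

lemma besselF_pos:
  assumes "mu \<ge> 0" "t \<ge> 0"
  shows "besselF mu t > 0"
  unfolding besselF_def
proof (rule suminf_pos2[where i = 0])
  show "summable (\<lambda>k. bessel_coeff mu k * t ^ k)" by (rule summable_bessel_coeff[OF assms(1)])
  show "0 \<le> bessel_coeff mu k * t ^ k" for k
    using bessel_coeff_pos[OF assms(1), of k] assms(2) by simp
  show "0 < bessel_coeff mu 0 * t ^ 0" using bessel_coeff_pos[OF assms(1)] by simp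
qed

lemma besselI_eq_besselF:
  assumes "mu \<ge> 0" "x > 0"
  shows "besselI mu x = (x / 2) powr mu * besselF mu (x\<^sup>2 / 4)"
proof -
  have "(x / 2) powr (2 * real k + mu) = (x / 2) powr mu * (x\<^sup>2 / 4) ^ k" for k
  proof -
    have "(x / 2) powr (2 * real k + mu) = (x / 2) ^ (2 * k) * (x / 2) powr mu"
      using assms(2) by (simp add: powr_add powr_realpow[symmetric])
    then show ?thesis by (simp add: power_mult power_divide)
  qed
  then have "besselI mu x = (\<Sum>k. (x / 2) powr mu * (bessel_coeff mu k * (x\<^sup>2 / 4) ^ k))"
    unfolding besselI_def bessel_coeff_def by simp
  also have "\<dots> = (x / 2) powr mu * besselF mu (x\<^sup>2 / 4)"
    unfolding besselF_def by (rule suminf_mult[OF summable_bessel_coeff[OF assms(1)]])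
  finally show ?thesis .
qed

lemma Qnu_eq_besselF:
  assumes "nu > 0" "x > 0"
  shows "Qnu nu x = 1 / x + x / 2 * besselF (nu + 1) (x\<^sup>2 / 4) / besselF nu (x\<^sup>2 / 4)"
proof -
  have "besselI (nu + 1) x = (x / 2) powr nu * (x / 2 * besselF (nu + 1) (x\<^sup>2 / 4))"
    using besselI_eq_besselF[of "nu + 1" x] assms by (simp add: powr_add)
  moreover have "besselI nu x = (x / 2) powr nu * besselF nu (x\<^sup>2 / 4)"
    using besselI_eq_besselF[of nu x] assms by simp
  moreover have "(x / 2) powr nu \<noteq> 0" using assms by simp
  ultimately show ?thesis
    unfolding Qnu_def by (metis mult_divide_mult_cancel_left)
qed

text \<open>The numerator of \<open>-Q_nu'\<close>: with \<open>f = F_nu(t)\<close>, \<open>g = F_(nu+1)(t)\<close>, \<open>t = x^2/4\<close> one has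
  \<open>Q_nu'(x) = - Pnu nu t / (x^2 f^2)\<close>, so \<open>Q_nu\<close> decreases wherever \<open>Pnu nu (x^2/4) > 0\<close>.\<close>

definition Pnu :: "real \<Rightarrow> real \<Rightarrow> real" where
  "Pnu nu t = besselF nu t ^ 2 + 2 * (2 * nu + 1) * t * besselF nu t * besselF (nu + 1) t
     + 4 * t ^ 2 * besselF (nu + 1) t ^ 2 - 4 * t * besselF nu t ^ 2"

lemma Qnu_deriv_simplify:
  fixes x t f g h nu :: real
  assumes x: "x > 0" and f: "f > 0" and t: "t = x\<^sup>2 / 4" and rec: "t * h = f - (nu + 1) * g"
  shows "- 1 / x\<^sup>2 + ((g / 2 + x / 2 * (h * (x / 2))) * f - x / 2 * g * (g * (x / 2))) / f\<^sup>2
    = - (f\<^sup>2 + 2 * (2 * nu + 1) * t * f * g + 4 * t\<^sup>2 * g\<^sup>2 - 4 * t * f\<^sup>2) / (x\<^sup>2 * f\<^sup>2)"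
proof -
  have "- 1 / x\<^sup>2 + ((g / 2 + x / 2 * (h * (x / 2))) * f - x / 2 * g * (g * (x / 2))) / f\<^sup>2
      = (4 * t * (g / 2 * f + (t * h) * f - t * g * g) - f\<^sup>2) / (x\<^sup>2 * f\<^sup>2)"
    using x f unfolding t by (simp add: field_simps power2_eq_square)
  then show ?thesis unfolding rec by (simp add: algebra_simps power2_eq_square)
qed

lemma Qnu_deriv:
  assumes nu: "nu > 0" and x: "x > 0"
  shows "(Qnu nu has_real_derivative - Pnu nu (x\<^sup>2 / 4) / (x\<^sup>2 * besselF nu (x\<^sup>2 / 4) ^ 2)) (at x)"
proof -
  define f where "f = besselF nu"
  define g where "g = besselF (nu + 1)"
  define h where "h = besselF (nu + 2)"
  have dt: "((\<lambda>x. x\<^sup>2 / 4) has_real_derivative x / 2) (at x)"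
    by (auto intro!: derivative_eq_intros)
  have df: "((\<lambda>x. f (x\<^sup>2 / 4)) has_real_derivative g (x\<^sup>2 / 4) * (x / 2)) (at x)"
    unfolding f_def g_def using nu by (intro DERIV_chain2[OF besselF_deriv dt]) simp
  have dg: "((\<lambda>x. g (x\<^sup>2 / 4)) has_real_derivative h (x\<^sup>2 / 4) * (x / 2)) (at x)"
    unfolding g_def h_def using nu by (intro DERIV_chain2[OF besselF_deriv_succ dt]) simp
  have f_pos: "f (x\<^sup>2 / 4) > 0" unfolding f_def using besselF_pos nu by simp
  have "((\<lambda>x. 1 / x + x / 2 * g (x\<^sup>2 / 4) / f (x\<^sup>2 / 4)) has_real_derivative
      - 1 / x\<^sup>2 + ((g (x\<^sup>2 / 4) / 2 + x / 2 * (h (x\<^sup>2 / 4) * (x / 2))) * f (x\<^sup>2 / 4)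
        - x / 2 * g (x\<^sup>2 / 4) * (g (x\<^sup>2 / 4) * (x / 2))) / (f (x\<^sup>2 / 4))\<^sup>2) (at x)"
    using f_pos x
    by (auto intro!: derivative_eq_intros df dg) (simp add: field_simps power2_eq_square)
  also have "- 1 / x\<^sup>2 + ((g (x\<^sup>2 / 4) / 2 + x / 2 * (h (x\<^sup>2 / 4) * (x / 2))) * f (x\<^sup>2 / 4)
        - x / 2 * g (x\<^sup>2 / 4) * (g (x\<^sup>2 / 4) * (x / 2))) / (f (x\<^sup>2 / 4))\<^sup>2
      = - Pnu nu (x\<^sup>2 / 4) / (x\<^sup>2 * f (x\<^sup>2 / 4) ^ 2)"
    unfolding Pnu_def f_def[symmetric] g_def[symmetric]
    by (rule Qnu_deriv_simplify[OF x f_pos refl])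
       (use besselF_recurrence[of nu "x\<^sup>2 / 4"] nu in \<open>simp add: f_def g_def h_def\<close>)
  finally show ?thesis
    unfolding f_def g_def
    by (rule has_field_derivative_transform_within_open[where S = "{0<..}"])
       (use x Qnu_eq_besselF[OF nu] in auto)
qed

lemma Qnu_strict_antimono:
  assumes nu: "nu > 0" and S: "is_interval S" "S \<subseteq> {0<..}"
    and P: "\<And>x. x \<in> S \<Longrightarrow> Pnu nu (x\<^sup>2 / 4) > 0"
  shows "strict_antimono_on S (Qnu nu)"
proof (rule strict_antimono_on_if_deriv_neg[OF S(1)])
  fix x assume x: "x \<in> S"
  then have "x > 0" using S(2) by auto
  then show "(Qnu nu has_real_derivative - Pnu nu (x\<^sup>2 / 4) / (x\<^sup>2 * besselF nu (x\<^sup>2 / 4) ^ 2)) (at x)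
      \<and> - Pnu nu (x\<^sup>2 / 4) / (x\<^sup>2 * besselF nu (x\<^sup>2 / 4) ^ 2) < 0"
    using Qnu_deriv[OF nu] P[OF x] besselF_pos[of nu "x\<^sup>2 / 4"] nu by simp
qed

text \<open>\<open>H = (2t + nu + 1) g^2 + (2 nu + 1) f g - 2 f^2 > 0\<close> for \<open>t > 0\<close>: by the recurrence,
  \<open>(nu + 1/2) H + t H' = (2 nu + 3)/2 g (t h) > 0\<close>.\<close>

lemma besselF_H_pos:
  assumes nu: "nu > 0" and t: "t > 0"
  shows "(2 * t + nu + 1) * besselF (nu + 1) t ^ 2 + (2 * nu + 1) * besselF nu t * besselF (nu + 1) t
    - 2 * besselF nu t ^ 2 > 0"
proof -
  define f where "f = besselF nu"
  define g where "g = besselF (nu + 1)"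
  define h where "h = besselF (nu + 2)"
  have df: "(f has_real_derivative g s) (at s)" for s
    unfolding f_def g_def using besselF_deriv nu by simp
  have dg: "(g has_real_derivative h s) (at s)" for s
    unfolding g_def h_def using besselF_deriv_succ nu by simp
  define H where "H s = (2 * s + nu + 1) * g s ^ 2 + (2 * nu + 1) * f s * g s - 2 * f s ^ 2" for s
  define H' where "H' s = 2 * g s ^ 2 + 2 * (2 * s + nu + 1) * g s * h s
    + (2 * nu + 1) * (g s * g s + f s * h s) - 4 * f s * g s" for s
  have "H t > 0"
  proof (rule pos_by_weighted_derivative[where phi = H and phi' = H' and a = "nu + 1 / 2"])
    show "(H has_real_derivative H' s) (at s)" if "0 \<le> s" "s \<le> t" for s
      unfolding H_def[abs_def] H'_def
      by (auto intro!: derivative_eq_intros df dg simp: algebra_simps power2_eq_square)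
    fix s :: real assume s: "0 < s" "s < t"
    have rec: "s * h s = f s - (nu + 1) * g s"
      unfolding f_def g_def h_def using besselF_recurrence nu by simp
    have "(nu + 1 / 2) * H s + s * H' s = (2 * nu + 3) / 2 * g s * (s * h s)"
      unfolding H_def H'_def using rec by algebra
    moreover have "(2 * nu + 3) / 2 * g s * (s * h s) > 0"
      unfolding g_def h_def using besselF_pos nu s by simp
    ultimately show "(nu + 1 / 2) * H s + s * H' s > 0" by simp
  qed (use nu t in auto)
  then show ?thesis unfolding H_def f_def g_def .
qed

text \<open>\<open>D = f^2 - (nu + 1) f g - t g^2 < 0\<close> for \<open>t > 0\<close>: by the recurrence,
  \<open>(nu + 1) (-D) + t (-D') = t g^2 > 0\<close>.\<close>

lemma besselF_D_neg:
  assumes nu: "nu > 0" and t: "t > 0"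
  shows "besselF nu t ^ 2 - (nu + 1) * besselF nu t * besselF (nu + 1) t - t * besselF (nu + 1) t ^ 2 < 0"
proof -
  define f where "f = besselF nu"
  define g where "g = besselF (nu + 1)"
  define h where "h = besselF (nu + 2)"
  have df: "(f has_real_derivative g s) (at s)" for s
    unfolding f_def g_def using besselF_deriv nu by simp
  have dg: "(g has_real_derivative h s) (at s)" for s
    unfolding g_def h_def using besselF_deriv_succ nu by simp
  define D where "D s = s * g s ^ 2 + (nu + 1) * f s * g s - f s ^ 2" for s
  define D' where "D' s = g s ^ 2 + 2 * s * g s * h s + (nu + 1) * (g s * g s + f s * h s) - 2 * f s * g s" for s
  have "D t > 0"
  proof (rule pos_by_weighted_derivative[where phi = D and phi' = D' and a = "nu + 1"])
    show "(D has_real_derivative D' s) (at s)" if "0 \<le> s" "s \<le> t" for s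
      unfolding D_def[abs_def] D'_def
      by (auto intro!: derivative_eq_intros df dg simp: algebra_simps power2_eq_square)
    fix s :: real assume s: "0 < s" "s < t"
    have rec: "s * h s = f s - (nu + 1) * g s"
      unfolding f_def g_def h_def using besselF_recurrence nu by simp
    have "(nu + 1) * D s + s * D' s = s * g s ^ 2"
      unfolding D_def D'_def using rec by algebra
    moreover have "g s > 0" unfolding g_def using besselF_pos nu s by auto
    ultimately show "(nu + 1) * D s + s * D' s > 0" using s by simp
  qed (use nu t in auto)
  then show ?thesis unfolding D_def f_def g_def by simp
qed

text \<open>For \<open>nu \<le> 1/2\<close>: \<open>Pnu' = -2 (1 - 2 nu) D \<ge> 0\<close>, so \<open>Pnu nu t \<ge> Pnu nu 0 = F_nu(0)^2 > 0\<close>.\<close>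

lemma Pnu_pos_small_order:
  assumes nu: "0 < nu" "nu \<le> 1 / 2" and t: "t \<ge> 0"
  shows "Pnu nu t > 0"
proof -
  define f where "f = besselF nu"
  define g where "g = besselF (nu + 1)"
  define h where "h = besselF (nu + 2)"
  have df: "(f has_real_derivative g s) (at s)" for s
    unfolding f_def g_def using besselF_deriv nu by simp
  have dg: "(g has_real_derivative h s) (at s)" for s
    unfolding g_def h_def using besselF_deriv_succ nu by simp
  define P' where "P' s = 2 * f s * g s + 2 * (2 * nu + 1) * (f s * g s + s * g s ^ 2 + s * f s * h s)
    + 8 * s * g s ^ 2 + 8 * s ^ 2 * g s * h s - 4 * f s ^ 2 - 8 * s * f s * g s" for s
  have dP: "(Pnu nu has_real_derivative P' s) (at s)" for s
    unfolding Pnu_def[abs_def] P'_def f_def[symmetric] g_def[symmetric]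
    by (auto intro!: derivative_eq_intros df dg simp: algebra_simps power2_eq_square)
  have "Pnu nu 0 \<le> Pnu nu t"
  proof (rule DERIV_nonneg_imp_increasing_open[OF t])
    fix s :: real assume s: "0 < s" "s < t"
    have rec: "s * h s = f s - (nu + 1) * g s"
      unfolding f_def g_def h_def using besselF_recurrence nu by simp
    have "P' s = 2 * (1 - 2 * nu) * - (f s ^ 2 - (nu + 1) * f s * g s - s * g s ^ 2)"
      unfolding P'_def using rec by algebra
    moreover have "f s ^ 2 - (nu + 1) * f s * g s - s * g s ^ 2 < 0"
      unfolding f_def g_def by (rule besselF_D_neg[OF nu(1) s(1)])
    ultimately have "P' s \<ge> 0" using nu by simp
    then show "\<exists>y. (Pnu nu has_real_derivative y) (at s) \<and> y \<ge> 0" using dP by blast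
  next
    show "continuous_on {0..t} (Pnu nu)"
      using dP by (meson DERIV_isCont continuous_at_imp_continuous_on)
  qed
  moreover have "Pnu nu 0 > 0" unfolding Pnu_def using besselF_pos[of nu 0] nu by simp
  ultimately show ?thesis by linarith
qed

text \<open>Elementary inequality: in terms of \<open>u = 2 t g / f\<close> and \<open>c = 2 nu + 1\<close>, positivity of \<open>H\<close>
  forces positivity of \<open>Pnu / f^2 = u^2 + c u + 1 - 4 t\<close> as long as \<open>4 t < c + 3\<close>.\<close>

lemma quadratic_transfer:
  fixes c t u :: real
  assumes c: "c > 0" and t: "4 * t < c + 3" and u: "u > 0"
    and H: "(4 * t + c + 1) * u\<^sup>2 + 4 * c * t * u > 16 * t\<^sup>2"
  shows "u\<^sup>2 + c * u + 1 - 4 * t > 0"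
proof (rule ccontr)
  assume "\<not> ?thesis"
  then have Q: "u\<^sup>2 + c * u + 1 \<le> 4 * t" by simp
  have "16 * t\<^sup>2 < 4 * t * (u\<^sup>2 + c * u) + (c + 1) * u\<^sup>2"
    using H by (simp add: algebra_simps power2_eq_square)
  also have "\<dots> \<le> 4 * t * (4 * t - 1) + (c + 1) * u\<^sup>2"
  proof -
    have "0 \<le> 4 * t" using Q u c by (smt (verit) zero_le_power2 mult_pos_pos)
    with Q show ?thesis by (simp add: mult_left_mono)
  qed
  finally have "(c + 1) * u\<^sup>2 > 4 * t" by (simp add: algebra_simps power2_eq_square)
  with Q have cu: "c * u * (u - 1) > 1" by (simp add: algebra_simps power2_eq_square)
  moreover have "c * u > 0" using c u by simp
  ultimately have u1: "u > 1" by (smt (verit) zero_less_mult_iff)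
  have "(u - 1) * (u + 1 + c) < 1" using Q t by (simp add: algebra_simps power2_eq_square)
  moreover have "(c + 2) * (u - 1) \<le> (u + 1 + c) * (u - 1)" using u1 by (intro mult_right_mono) auto
  ultimately have e: "(c + 2) * (u - 1) < 1" by (simp add: mult.commute)
  then have "(c + 2) * u < c + 3" by (simp add: algebra_simps)
  then have "c * ((c + 2) * (u - 1)) * ((c + 2) * u) < c * 1 * (c + 3)"
    using e c u1 by (intro mult_strict_mono mult_strict_left_mono) auto
  moreover have "c * ((c + 2) * (u - 1)) * ((c + 2) * u) = (c + 2)\<^sup>2 * (c * u * (u - 1))"
    by (simp add: algebra_simps power2_eq_square)
  moreover have "(c + 2)\<^sup>2 * (c * u * (u - 1)) > (c + 2)\<^sup>2"
    using cu c by simp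
  ultimately have "(c + 2)\<^sup>2 < c * (c + 3)" by linarith
  then show False using c by (simp add: algebra_simps power2_eq_square)
qed

lemma Pnu_pos_near_origin:
  assumes nu: "nu > 0" and t: "t > 0" "2 * t < nu + 2"
  shows "Pnu nu t > 0"
proof -
  define f where "f = besselF nu t"
  define g where "g = besselF (nu + 1) t"
  define c where "c = 2 * nu + 1"
  define u where "u = 2 * t * g / f"
  have f: "f > 0" and g: "g > 0" unfolding f_def g_def using besselF_pos nu t by auto
  have H: "(2 * t + nu + 1) * g\<^sup>2 + c * f * g - 2 * f\<^sup>2 > 0"
    unfolding f_def g_def c_def using besselF_H_pos[OF nu t(1)] by simp
  have "(4 * t + c + 1) * u\<^sup>2 + 4 * c * t * u - 16 * t\<^sup>2
      = 8 * t\<^sup>2 / f\<^sup>2 * ((2 * t + nu + 1) * g\<^sup>2 + c * f * g - 2 * f\<^sup>2)"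
    using f unfolding u_def c_def by (simp add: field_simps power2_eq_square)
  also have "\<dots> > 0" using H f t by simp
  finally have "u\<^sup>2 + c * u + 1 - 4 * t > 0"
    using t f g nu by (intro quadratic_transfer) (auto simp: c_def u_def)
  moreover have "Pnu nu t = f\<^sup>2 * (u\<^sup>2 + c * u + 1 - 4 * t)"
    using f unfolding Pnu_def f_def[symmetric] g_def[symmetric] u_def c_def
    by (simp add: field_simps power2_eq_square)
  ultimately show ?thesis using f by simp
qed

theorem mainTheorem11:
  shows "(\<forall>nu::real. nu > 0 \<longrightarrow>
            strict_antimono_on {0<..<sqrt (2 * nu + 4)} (Qnu nu)) \<and>
         (\<forall>nu::real. 0 < nu \<and> nu \<le> 1 / 2 \<longrightarrow>
            strict_antimono_on {0<..} (Qnu nu))"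
proof (intro conjI allI impI)
  fix nu :: real assume nu: "nu > 0"
  show "strict_antimono_on {0<..<sqrt (2 * nu + 4)} (Qnu nu)"
  proof (rule Qnu_strict_antimono[OF nu])
    fix x assume x: "x \<in> {0<..<sqrt (2 * nu + 4)}"
    then have "x\<^sup>2 < (sqrt (2 * nu + 4))\<^sup>2" by (intro power_strict_mono) auto
    then have "x\<^sup>2 < 2 * nu + 4" using nu by simp
    then show "Pnu nu (x\<^sup>2 / 4) > 0"
      using x by (intro Pnu_pos_near_origin[OF nu]) auto
  qed auto
next
  fix nu :: real assume "0 < nu \<and> nu \<le> 1 / 2"
  then show "strict_antimono_on {0<..} (Qnu nu)"
    by (intro Qnu_strict_antimono Pnu_pos_small_order) auto
qed

end
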